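(* Let $G$ be a simple graph with $n$ vertices and independence number $\alpha(G)$. Then the multiplicity of $1$ as a root of $P(\mathcal{H}_{\bullet G},\lambda)$ equals $n-\alpha(G)$.
   Context: A hypergraph $\mathcal{H}=(\mathcal{V},\mathcal{E})$ consists of a finite vertex set $\mathcal{V}$ and a set $\mathcal{E}$ of subsets of $\mathcal{V}$, each of size at least $1$, called edges. For a positive integer $\lambda$, a weak proper $\lambda$-colouring of $\mathcal{H}$ is a map $\phi:\mathcal{V}\to\{1,\dots,\lambda\}$ such that $|\{\phi(v):v\in e\}|>1$ for every $e\in\mathcal{E}$. $P(\mathcal{H},\lambda)$ denotes the number of weak proper $\lambda$-colourings of $\mathcal{H}$; it is a polynomial in $\lambda$ of degree $|\mathcal{V}|$. For a simple graph $G=(V,E)$, $\mathcal{H}_{\bullet G}$ is the hypergraph with vertex set $V\cup\{w\}$, where $w\notin V$ is a new vertex, and edge set $\{\{u,v,w\}: uv\in E\}$. *)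

theory Defs
  imports "HOL-Library.FuncSet" "HOL-Computational_Algebra.Polynomial"
begin

type_synonym 'a hypergraph = "'a set \<times> 'a set set"

definition weak_colourings :: "'a hypergraph \<Rightarrow> nat \<Rightarrow> ('a \<Rightarrow> nat) set" where
  "weak_colourings H lam =
     {phi \<in> fst H \<rightarrow>\<^sub>E {1..lam}. \<forall>e \<in> snd H. card (phi ` e) > 1}"

definition num_weak_colourings :: "'a hypergraph \<Rightarrow> nat \<Rightarrow> nat" where
  "num_weak_colourings H lam = card (weak_colourings H lam)"

definition chrom_poly :: "'a hypergraph \<Rightarrow> real poly" where
  "chrom_poly H = (THE p. \<forall>lam::nat. lam \<ge> 1 \<longrightarrow>
                      poly p (real lam) = real (num_weak_colourings H lam))"

definition simple_graph :: "'a set \<Rightarrow> 'a set set \<Rightarrow> bool" where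
  "simple_graph V E \<longleftrightarrow> finite V \<and> (\<forall>e \<in> E. e \<subseteq> V \<and> card e = 2)"

definition independent_set :: "'a set \<Rightarrow> 'a set set \<Rightarrow> 'a set \<Rightarrow> bool" where
  "independent_set V E S \<longleftrightarrow> S \<subseteq> V \<and> (\<forall>e \<in> E. \<not> e \<subseteq> S)"

definition independence_number :: "'a set \<Rightarrow> 'a set set \<Rightarrow> nat" where
  "independence_number V E = Max (card ` {S. independent_set V E S})"

text \<open>H_{\<bullet>G}: vertex set V plus a new vertex w (= None), edges {u,v,w} for uv in E.\<close>
definition cone_hypergraph :: "'a set \<Rightarrow> 'a set set \<Rightarrow> 'a option hypergraph" where
  "cone_hypergraph V E =
     (insert None (Some ` V), {insert None (Some ` e) | e. e \<in> E})"

end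

theory Submission
  imports Defs
begin

text \<open>A weak colouring of the cone over \<open>G\<close> is a colour \<open>c\<close> of the apex together with a colouring
  of \<open>G\<close> in which the vertices of colour \<open>c\<close> form an independent set \<open>S\<close>; the remaining vertices
  avoid \<open>c\<close>. Hence \<open>P(\<lambda>) = \<lambda> \<Sum>\<^sub>S (\<lambda> - 1)^(n - |S|)\<close>, a sum of powers of \<open>\<lambda> - 1\<close> whose
  least exponent \<open>n - \<alpha>(G)\<close> occurs with a positive coefficient (the number of maximum
  independent sets), so it is exactly the multiplicity of the root \<open>1\<close>.\<close>

lemma poly_eq_if_agree_on_infinite:
  fixes p q :: "'a::idom poly"
  assumes "infinite A" and "\<And>x. x \<in> A \<Longrightarrow> poly p x = poly q x"
  shows "p = q"
proof (rule ccontr)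
  assume "p \<noteq> q"
  then have "finite {x. poly (p - q) x = 0}"
    by (intro poly_roots_finite) simp
  moreover have "A \<subseteq> {x. poly (p - q) x = 0}"
    using assms(2) by auto
  ultimately show False
    using assms(1) finite_subset by blast
qed

lemma order_sum_linear_powers:
  fixes a :: "'a::{idom,ring_char_0}"
  assumes "finite A" and "j \<in> A" and "f j = m" and "\<And>i. i \<in> A \<Longrightarrow> m \<le> f i"
  shows "(\<Sum>i\<in>A. [:-a, 1:] ^ f i) \<noteq> 0" and "order a (\<Sum>i\<in>A. [:-a, 1:] ^ f i) = m"
proof -
  define r where "r = (\<Sum>i\<in>A. [:-a, 1:] ^ (f i - m))"
  have factor: "(\<Sum>i\<in>A. [:-a, 1:] ^ f i) = [:-a, 1:] ^ m * r"
    unfolding r_def sum_distrib_left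
    by (intro sum.cong refl) (simp flip: power_add add: assms(4))
  have "poly r a = (\<Sum>i\<in>A. of_bool (f i = m))"
    unfolding r_def poly_sum by (intro sum.cong refl) (use assms(4) in \<open>force simp: power_0_left\<close>)
  also have "\<dots> = of_nat (card {i\<in>A. f i = m})"
    using assms(1) by (simp add: Int_def)
  also have "\<dots> \<noteq> 0"
    using assms(1-3) by auto
  finally have "poly r a \<noteq> 0" .
  moreover from this have "r \<noteq> 0"
    by auto
  ultimately show "(\<Sum>i\<in>A. [:-a, 1:] ^ f i) \<noteq> 0" and "order a (\<Sum>i\<in>A. [:-a, 1:] ^ f i) = m"
    unfolding factor by (simp_all add: order_mult order_power_n_n order_0I)
qed

lemma chrom_poly_eqI:
  assumes "\<And>lam. lam \<ge> 1 \<Longrightarrow> poly p (real lam) = real (num_weak_colourings H lam)"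
  shows "chrom_poly H = p"
  unfolding chrom_poly_def
proof (rule the_equality)
  fix q assume q: "\<forall>lam::nat. lam \<ge> 1 \<longrightarrow> poly q (real lam) = real (num_weak_colourings H lam)"
  have "infinite (real ` {1..})"
    using finite_imageD[of real "{1::nat..}"] by (auto simp: inj_on_def infinite_Ici)
  then show "q = p"
    by (rule poly_eq_if_agree_on_infinite) (use q assms in auto)
qed (use assms in auto)

lemma card_image_gt_1_iff:
  assumes "finite X" and "a \<in> X"
  shows "card (f ` X) > 1 \<longleftrightarrow> (\<exists>x\<in>X. f x \<noteq> f a)"
proof
  assume "card (f ` X) > 1"
  then have "f ` X \<noteq> {f a}"
    by auto
  then show "\<exists>x\<in>X. f x \<noteq> f a"
    using assms(2) by auto
next
  assume "\<exists>x\<in>X. f x \<noteq> f a"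
  then obtain x where "x \<in> X" and "f x \<noteq> f a"
    by blast
  then have "card {f a, f x} \<le> card (f ` X)"
    using assms by (intro card_mono) auto
  with \<open>f x \<noteq> f a\<close> show "card (f ` X) > 1"
    by simp
qed

lemma finite_independent_sets:
  assumes "finite V"
  shows "finite {S. independent_set V E S}"
  by (rule finite_subset[of _ "Pow V"]) (use assms in \<open>auto simp: independent_set_def\<close>)

lemma card_le_independence_number:
  assumes "finite V" and "independent_set V E S"
  shows "card S \<le> independence_number V E"
  unfolding independence_number_def
  using assms by (intro Max_ge finite_imageI finite_independent_sets) auto

lemma independence_number_attained:
  assumes "simple_graph V E"
  obtains S where "independent_set V E S" and "card S = independence_number V E"
proof -
  have "independent_set V E {}"
    using assms by (auto simp: independent_set_def simple_graph_def)
  then have "independence_number V E \<in> card ` {S. independent_set V E S}"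
    unfolding independence_number_def using assms
    by (intro Max_in finite_imageI finite_independent_sets) (auto simp: simple_graph_def)
  then show ?thesis
    using that by force
qed

definition cone_colouring_class :: "'a set \<Rightarrow> nat \<Rightarrow> nat \<Rightarrow> 'a set \<Rightarrow> ('a option \<Rightarrow> nat) set" where
  "cone_colouring_class V lam c S =
     (\<Pi>\<^sub>E x\<in>insert None (Some ` V). case x of None \<Rightarrow> {c} | Some v \<Rightarrow> if v \<in> S then {c} else {1..lam} - {c})"

lemma mem_cone_colouring_class_iff:
  assumes "c \<in> {1..lam}" and "S \<subseteq> V"
  shows "phi \<in> cone_colouring_class V lam c S \<longleftrightarrow>
         phi \<in> insert None (Some ` V) \<rightarrow>\<^sub>E {1..lam} \<and> phi None = c \<and> S = {v\<in>V. phi (Some v) = c}"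
  using assms by (auto simp: cone_colouring_class_def PiE_iff split: if_splits)

lemma finite_cone_colouring_class:
  assumes "finite V"
  shows "finite (cone_colouring_class V lam c S)"
  using assms by (auto simp: cone_colouring_class_def intro!: finite_PiE split: option.split)

lemma card_cone_colouring_class:
  assumes "finite V" and "c \<in> {1..lam}" and "S \<subseteq> V"
  shows "card (cone_colouring_class V lam c S) = (lam - 1) ^ (card V - card S)"
proof -
  have "card (cone_colouring_class V lam c S) = (\<Prod>v\<in>V. card (if v \<in> S then {c} else {1..lam} - {c}))"
    using assms(1) by (simp add: cone_colouring_class_def card_PiE prod.reindex)
  also have "\<dots> = (\<Prod>v\<in>V. if v \<in> S then 1 else lam - 1)"
    using assms(2) by (intro prod.cong refl) simp
  also have "\<dots> = (lam - 1) ^ card (V - S)"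
    using assms(1) by (simp add: prod.If_cases Diff_eq)
  finally show ?thesis
    using assms by (simp add: card_Diff_subset finite_subset)
qed

lemma weak_colouring_cone_iff:
  assumes "simple_graph V E"
  shows "phi \<in> weak_colourings (cone_hypergraph V E) lam \<longleftrightarrow>
         phi \<in> insert None (Some ` V) \<rightarrow>\<^sub>E {1..lam} \<and>
         independent_set V E {v\<in>V. phi (Some v) = phi None}"
proof -
  have "card (phi ` insert None (Some ` e)) > 1 \<longleftrightarrow> \<not> e \<subseteq> {v\<in>V. phi (Some v) = phi None}"
    if "e \<in> E" for e
  proof -
    have "e \<subseteq> V" and "finite e"
      using assms that by (auto simp: simple_graph_def intro: card_ge_0_finite)
    then show ?thesis
      by (subst card_image_gt_1_iff) auto
  qed
  then show ?thesis
    by (auto simp: weak_colourings_def cone_hypergraph_def independent_set_def setcompr_eq_image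
        simp del: image_insert)
qed

lemma weak_colourings_cone_eq:
  assumes "simple_graph V E"
  shows "weak_colourings (cone_hypergraph V E) lam =
         (\<Union>(c, S)\<in>{1..lam} \<times> {S. independent_set V E S}. cone_colouring_class V lam c S)"
proof (intro set_eqI iffI)
  fix phi :: "'a option \<Rightarrow> nat"
  define S where "S = {v\<in>V. phi (Some v) = phi None}"
  assume "phi \<in> weak_colourings (cone_hypergraph V E) lam"
  then have phi: "phi \<in> insert None (Some ` V) \<rightarrow>\<^sub>E {1..lam}" and "independent_set V E S"
    by (simp_all add: weak_colouring_cone_iff[OF assms] S_def)
  moreover have "phi None \<in> {1..lam}"
    using phi by auto
  moreover have "phi \<in> cone_colouring_class V lam (phi None) S"
    using phi \<open>phi None \<in> {1..lam}\<close> by (subst mem_cone_colouring_class_iff) (auto simp: S_def)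
  ultimately show "phi \<in> (\<Union>(c, S)\<in>{1..lam} \<times> {S. independent_set V E S}. cone_colouring_class V lam c S)"
    by (intro UN_I[of "(phi None, S)"]) auto
next
  fix phi
  assume "phi \<in> (\<Union>(c, S)\<in>{1..lam} \<times> {S. independent_set V E S}. cone_colouring_class V lam c S)"
  then obtain c S where "c \<in> {1..lam}" and "independent_set V E S"
    and "phi \<in> cone_colouring_class V lam c S"
    by blast
  then show "phi \<in> weak_colourings (cone_hypergraph V E) lam"
    using assms by (auto simp: weak_colouring_cone_iff mem_cone_colouring_class_iff independent_set_def)
qed

lemma num_weak_colourings_cone:
  assumes "simple_graph V E"
  shows "num_weak_colourings (cone_hypergraph V E) lam =
         lam * (\<Sum>S | independent_set V E S. (lam - 1) ^ (card V - card S))"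
proof -
  let ?I = "{1..lam} \<times> {S. independent_set V E S}"
  have "finite V"
    using assms by (simp add: simple_graph_def)
  then have fin: "finite ?I"
    by (simp add: finite_independent_sets)
  have disj: "\<forall>i\<in>?I. \<forall>j\<in>?I. i \<noteq> j \<longrightarrow>
      (case i of (c, S) \<Rightarrow> cone_colouring_class V lam c S) \<inter>
      (case j of (c, S) \<Rightarrow> cone_colouring_class V lam c S) = {}"
    by (fastforce simp: mem_cone_colouring_class_iff independent_set_def)
  have "\<forall>i\<in>?I. finite (case i of (c, S) \<Rightarrow> cone_colouring_class V lam c S)"
    using \<open>finite V\<close> by (auto simp: finite_cone_colouring_class)
  then have "num_weak_colourings (cone_hypergraph V E) lam =
        (\<Sum>(c, S)\<in>?I. card (cone_colouring_class V lam c S))"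
    unfolding num_weak_colourings_def weak_colourings_cone_eq[OF assms]
    using card_UN_disjoint[OF fin _ disj] by (simp add: case_prod_beta')
  also have "\<dots> = (\<Sum>(c, S)\<in>?I. (lam - 1) ^ (card V - card S))"
    using \<open>finite V\<close>
    by (intro sum.cong refl) (auto simp: card_cone_colouring_class independent_set_def)
  also have "\<dots> = (\<Sum>c\<in>{1..lam}. \<Sum>S | independent_set V E S. (lam - 1) ^ (card V - card S))"
    by (rule sum.cartesian_product[symmetric])
  finally show ?thesis
    by simp
qed

lemma chrom_poly_cone:
  assumes "simple_graph V E"
  shows "chrom_poly (cone_hypergraph V E) =
         [:0, 1:] * (\<Sum>S | independent_set V E S. [:-1, 1:] ^ (card V - card S))"
proof (rule chrom_poly_eqI)
  fix lam :: nat
  assume "lam \<ge> 1"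
  then show "poly ([:0, 1:] * (\<Sum>S | independent_set V E S. [:-1, 1:] ^ (card V - card S))) (real lam) =
             real (num_weak_colourings (cone_hypergraph V E) lam)"
    by (simp add: num_weak_colourings_cone[OF assms] poly_sum of_nat_diff)
qed

theorem mainTheorem2:
  fixes V :: "'a set" and E :: "'a set set"
  assumes "simple_graph V E"
  shows "order 1 (chrom_poly (cone_hypergraph V E)) = card V - independence_number V E"
proof -
  let ?q = "\<Sum>S | independent_set V E S. [:-1, 1:] ^ (card V - card S) :: real poly"
  have "finite V"
    using assms by (simp add: simple_graph_def)
  obtain S0 where S0: "independent_set V E S0" "card S0 = independence_number V E"
    using independence_number_attained[OF assms] .
  have "card V - independence_number V E \<le> card V - card S" if "independent_set V E S" for S
    using card_le_independence_number[OF \<open>finite V\<close> that] by simp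
  then have "?q \<noteq> 0" and "order 1 ?q = card V - independence_number V E"
    using order_sum_linear_powers[where a = 1 and A = "{S. independent_set V E S}" and j = S0
        and f = "\<lambda>S. card V - card S"] finite_independent_sets[OF \<open>finite V\<close>] S0
    by auto
  then show ?thesis
    unfolding chrom_poly_cone[OF assms] by (subst order_mult) (simp_all add: order_0I)
qed


end
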